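(* Let $r\ge 2$ and let $\widehat{\rm TL}_r(q)$ be the affine Temperley–Lieb algebra over $\mathcal K_0$, with elements $e_1\in\widehat{\rm TL}_r(q)$ and $x_1^{\pm1}\in\widehat{\rm TL}_r(q)$ as described in the context. Put $\delta=-(q+q^{-1})$. Then in $\widehat{\rm TL}_r(q)$, $$\delta\,(q\,e_1x_1^2+e_1x_1e_1x_1)=q\,e_1x_1^2e_1+e_1x_1e_1x_1e_1=\delta\,(q\,x_1^2e_1+x_1e_1x_1e_1).$$
   Context: $\mathcal K_0=\mathbb C(q^{1/k})$ with $q$ an indeterminate. The braid group $\Gamma_r$ of type $B$ is generated by $\sigma_1,\dots,\sigma_{r-1},\xi_1$ subject to: $\sigma_i\sigma_{i+1}\sigma_i=\sigma_{i+1}\sigma_i\sigma_{i+1}$, $\sigma_i\sigma_j=\sigma_j\sigma_i$ for $|i-j|>1$, $\xi_1\sigma_j=\sigma_j\xi_1$ for $j\ge2$, and $\sigma_1\xi_1\sigma_1\xi_1=\xi_1\sigma_1\xi_1\sigma_1$. The affine Hecke algebra $\widehat H_r(q)$ is the quotient of the group algebra $\mathcal K_0\Gamma_r$ by the two-sided ideal generated by $(\sigma_i-q)(\sigma_i+q^{-1})$ for all $i$; write $T_i,X_1$ for the images of $\sigma_i,\xi_1$ and $X_{i+1}=T_iX_iT_i$. For $w\in{\rm Sym}_3$ let $T_w=T_{i_1}\cdots T_{i_k}$ for a reduced expression $w=s_{i_1}\cdots s_{i_k}$ ($s_1,s_2$ the simple transpositions), $\ell(w)=k$, and $\mathcal E_3=\sum_{w\in{\rm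 Sym}_3}(-q^{-1})^{\ell(w)}T_w$. The affine Temperley–Lieb algebra is $\widehat{\rm TL}_r(q)=\widehat H_r(q)/\langle\mathcal E_3\rangle$ (for $r\le2$ no quotient is taken). Let $e_i$ be the image of $T_i-q$ and $x_i$ the image of $X_i$. *)

theory Defs
  imports "HOL-Computational_Algebra.Polynomial" "HOL-Computational_Algebra.Fraction_Field"
begin

text \<open>K0 is realised as the field of rational functions C(t) in an indeterminate t,
  and q := t^k, so that t = q^(1/k).\<close>

type_synonym K = "complex poly fract"

definition tpar :: K where "tpar = Fract [:0, 1:] 1"

definition qpar :: "nat \<Rightarrow> K" where "qpar k = tpar ^ k"

datatype gen = Sg nat | Sginv nat | Xg | Xginv

text \<open>Elements: K-valued functions on words (only finitely supported ones matter).\<close>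
type_synonym elt = "gen list \<Rightarrow> K"

definition lin :: "(K \<times> gen list) list \<Rightarrow> elt" where
  "lin xs = (\<lambda>w. sum_list (map (\<lambda>(c, u). if u = w then c else 0) xs))"

definition monom :: "gen list \<Rightarrow> elt" where
  "monom u = lin [(1, u)]"

definition aadd :: "elt \<Rightarrow> elt \<Rightarrow> elt" (infixl "\<oplus>" 65) where
  "a \<oplus> b = (\<lambda>w. a w + b w)"

definition asub :: "elt \<Rightarrow> elt \<Rightarrow> elt" where
  "asub a b = (\<lambda>w. a w - b w)"

definition ascal :: "K \<Rightarrow> elt \<Rightarrow> elt" where
  "ascal c a = (\<lambda>w. c * a w)"

definition amul :: "elt \<Rightarrow> elt \<Rightarrow> elt" (infixl "\<odot>" 70) where
  "a \<odot> b = (\<lambda>w. \<Sum>i\<in>{..length w}. a (take i w) * b (drop i w))"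

inductive_set tsideal :: "elt set \<Rightarrow> elt set" for R :: "elt set" where
  gen:  "a \<in> R \<Longrightarrow> a \<in> tsideal R"
| zero: "(\<lambda>_. 0) \<in> tsideal R"
| add:  "a \<in> tsideal R \<Longrightarrow> b \<in> tsideal R \<Longrightarrow> a \<oplus> b \<in> tsideal R"
| scal: "a \<in> tsideal R \<Longrightarrow> ascal c a \<in> tsideal R"
| lmul: "a \<in> tsideal R \<Longrightarrow> monom u \<odot> a \<in> tsideal R"
| rmul: "a \<in> tsideal R \<Longrightarrow> a \<odot> monom u \<in> tsideal R"

text \<open>Group algebra of the type-B braid group Gamma_r: generators sigma_1..sigma_(r-1), xi_1
  and their inverses; generator letters with indices outside 1..r-1 are killed.\<close>
definition braidB_rels :: "nat \<Rightarrow> elt set" where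
  "braidB_rels r =
      {monom [Sg i] | i. \<not> (1 \<le> i \<and> i \<le> r - 1)}
    \<union> {monom [Sginv i] | i. \<not> (1 \<le> i \<and> i \<le> r - 1)}
    \<union> {asub (monom [Sg i, Sginv i]) (monom []) | i. 1 \<le> i \<and> i \<le> r - 1}
    \<union> {asub (monom [Sginv i, Sg i]) (monom []) | i. 1 \<le> i \<and> i \<le> r - 1}
    \<union> {asub (monom [Xg, Xginv]) (monom []), asub (monom [Xginv, Xg]) (monom [])}
    \<union> {asub (monom [Sg i, Sg (i+1), Sg i]) (monom [Sg (i+1), Sg i, Sg (i+1)])
         | i. 1 \<le> i \<and> i + 1 \<le> r - 1}
    \<union> {asub (monom [Sg i, Sg j]) (monom [Sg j, Sg i])
         | i j. 1 \<le> i \<and> i \<le> r - 1 \<and> 1 \<le> j \<and> j \<le> r - 1 \<and> (i + 1 < j \<or> j + 1 < i)}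
    \<union> {asub (monom [Xg, Sg j]) (monom [Sg j, Xg]) | j. 2 \<le> j \<and> j \<le> r - 1}
    \<union> {asub (monom [Sg 1, Xg, Sg 1, Xg]) (monom [Xg, Sg 1, Xg, Sg 1]) | _::unit. 2 \<le> r}"

definition hecke_rels :: "nat \<Rightarrow> nat \<Rightarrow> elt set" where
  "hecke_rels r k =
     {(lin [(1, [Sg i]), (- qpar k, [])]) \<odot> (lin [(1, [Sg i]), (inverse (qpar k), [])])
       | i. 1 \<le> i \<and> i \<le> r - 1}"

text \<open>E_3 = sum over w in Sym_3 of (-q^(-1))^(length w) T_w.\<close>
definition E3 :: "nat \<Rightarrow> elt" where
  "E3 k = (let p = - inverse (qpar k) in
     lin [(1, []), (p, [Sg 1]), (p, [Sg 2]), (p^2, [Sg 1, Sg 2]), (p^2, [Sg 2, Sg 1]),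
          (p^3, [Sg 1, Sg 2, Sg 1])])"

definition affTL_rels :: "nat \<Rightarrow> nat \<Rightarrow> elt set" where
  "affTL_rels r k = braidB_rels r \<union> hecke_rels r k \<union> (if 3 \<le> r then {E3 k} else {})"

definition affTL_eq :: "nat \<Rightarrow> nat \<Rightarrow> elt \<Rightarrow> elt \<Rightarrow> bool" where
  "affTL_eq r k a b \<longleftrightarrow> asub a b \<in> tsideal (affTL_rels r k)"

definition eA :: "nat \<Rightarrow> nat \<Rightarrow> elt" where
  "eA k i = lin [(1, [Sg i]), (- qpar k, [])]"

definition x1A :: elt where "x1A = monom [Xg]"

end

theory Submission
  imports Defs
begin

text \<open>With \<open>Y = q e\<^sub>1 x\<^sub>1\<^sup>2 + e\<^sub>1 x\<^sub>1 e\<^sub>1 x\<^sub>1\<close>, the braid relation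
  \<open>T\<^sub>1 X\<^sub>1 T\<^sub>1 X\<^sub>1 = X\<^sub>1 T\<^sub>1 X\<^sub>1 T\<^sub>1\<close> rewritten in \<open>e\<^sub>1 = T\<^sub>1 - q\<close> says
  \<open>Y = q x\<^sub>1\<^sup>2 e\<^sub>1 + x\<^sub>1 e\<^sub>1 x\<^sub>1 e\<^sub>1\<close>, and the Hecke relation says \<open>e\<^sub>1\<^sup>2 = \<delta> e\<^sub>1\<close>.
  Hence \<open>\<delta> Y = e\<^sub>1 Y\<close> (first form of \<open>Y\<close>) and \<open>Y e\<^sub>1 = \<delta> Y\<close> (second form), while
  \<open>e\<^sub>1 Y\<close> and \<open>Y e\<^sub>1\<close>, computed with the other form, are both the middle term.\<close>

definition cong_mod :: "elt set \<Rightarrow> elt \<Rightarrow> elt \<Rightarrow> bool" where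
  "cong_mod R a b \<longleftrightarrow> asub a b \<in> tsideal R"

lemma affTL_eq_iff_cong_mod: "affTL_eq r k = cong_mod (affTL_rels r k)"
  unfolding affTL_eq_def cong_mod_def by (intro ext) (rule refl)

lemma lin_Nil: "lin [] = (\<lambda>_. 0)"
  unfolding lin_def by simp

lemma lin_append: "lin (xs @ ys) = lin xs \<oplus> lin ys"
  unfolding lin_def aadd_def by (rule ext) simp

lemma lin_Cons: "lin (x # xs) = lin [x] \<oplus> lin xs"
  using lin_append[of "[x]" xs] by simp

lemma lin_eval: "lin xs w = sum_list (map (\<lambda>(c, u). if u = w then c else 0) xs)"
  unfolding lin_def by simp

lemma lin_single: "lin [(c, u)] = ascal c (monom u)"
  unfolding monom_def lin_def ascal_def by (rule ext) simp

lemma lin_scal: "ascal c (lin xs) = lin (map (\<lambda>(d, u). (c * d, u)) xs)"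
  unfolding ascal_def lin_def by (rule ext, induction xs) (auto simp: distrib_left)

lemma lin_sub: "asub (lin xs) (lin ys) = lin (xs @ map (\<lambda>(d, u). (- d, u)) ys)"
proof -
  have "lin (map (\<lambda>(d, u). (- d, u)) ys) = (\<lambda>w. - lin ys w)"
    unfolding lin_def by (rule ext, induction ys) auto
  then show ?thesis
    unfolding lin_append asub_def aadd_def by simp
qed

lemma lin_eqI:
  assumes "\<forall>w \<in> set (map snd xs) \<union> set (map snd ys). lin xs w = lin ys w"
  shows "lin xs = lin ys"
proof (rule ext)
  fix w
  have outside: "w \<notin> set (map snd zs) \<Longrightarrow> lin zs w = 0" for zs
    unfolding lin_def by (induction zs) auto
  show "lin xs w = lin ys w"
    using assms outside[of xs] outside[of ys] by (cases "w \<in> set (map snd xs) \<union> set (map snd ys)") auto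
qed

lemma amul_add_left: "(a \<oplus> b) \<odot> c = a \<odot> c \<oplus> b \<odot> c"
  unfolding amul_def aadd_def by (rule ext) (simp add: sum.distrib distrib_right)

lemma amul_add_right: "c \<odot> (a \<oplus> b) = c \<odot> a \<oplus> c \<odot> b"
  unfolding amul_def aadd_def by (rule ext) (simp add: sum.distrib distrib_left)

lemma amul_sub_left: "asub a b \<odot> c = asub (a \<odot> c) (b \<odot> c)"
  unfolding amul_def asub_def by (rule ext) (simp add: sum_subtractf left_diff_distrib)

lemma amul_sub_right: "c \<odot> asub a b = asub (c \<odot> a) (c \<odot> b)"
  unfolding amul_def asub_def by (rule ext) (simp add: sum_subtractf right_diff_distrib)

lemma amul_scal_left: "ascal c a \<odot> b = ascal c (a \<odot> b)"
  unfolding amul_def ascal_def by (rule ext) (simp add: sum_distrib_left mult.assoc)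

lemma amul_scal_right: "a \<odot> ascal c b = ascal c (a \<odot> b)"
  unfolding amul_def ascal_def by (rule ext) (simp add: sum_distrib_left mult.left_commute)

lemma amul_zero_left: "(\<lambda>_. 0) \<odot> c = (\<lambda>_. 0)"
  unfolding amul_def by simp

lemma amul_zero_right: "c \<odot> (\<lambda>_. 0) = (\<lambda>_. 0)"
  unfolding amul_def by simp

lemma lin_single_mul: "lin [(c, u)] \<odot> lin [(d, v)] = lin [(c * d, u @ v)]"
proof (rule ext)
  fix w
  have "(\<Sum>i\<in>{..length w}. lin [(c, u)] (take i w) * lin [(d, v)] (drop i w))
      = (\<Sum>i\<in>{..length w}. if i = length u \<and> u @ v = w then c * d else 0)"
  proof (rule sum.cong[OF refl])
    fix i assume "i \<in> {..length w}"
    then have split_iff: "(u = take i w \<and> v = drop i w) = (i = length u \<and> u @ v = w)"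
      by (auto simp: min_def)
    have "lin [(c, u)] (take i w) * lin [(d, v)] (drop i w)
      = (if u = take i w \<and> v = drop i w then c * d else 0)"
      unfolding lin_def by simp
    then show "lin [(c, u)] (take i w) * lin [(d, v)] (drop i w)
      = (if i = length u \<and> u @ v = w then c * d else 0)"
      by (simp only: split_iff)
  qed
  also have "\<dots> = (if u @ v = w then c * d else 0)"
    by (auto simp: sum.delta')
  finally show "(lin [(c, u)] \<odot> lin [(d, v)]) w = lin [(c * d, u @ v)] w"
    unfolding amul_def lin_def by simp
qed

definition lin_mult :: "(K \<times> gen list) list \<Rightarrow> (K \<times> gen list) list \<Rightarrow> (K \<times> gen list) list" where
  "lin_mult xs ys = concat (map (\<lambda>(c, u). map (\<lambda>(d, v). (c * d, u @ v)) ys) xs)"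

lemma lin_single_mul_lin: "lin [(c, u)] \<odot> lin ys = lin (map (\<lambda>(d, v). (c * d, u @ v)) ys)"
proof (induction ys)
  case Nil
  then show ?case by (simp add: lin_Nil amul_zero_right)
next
  case (Cons y ys)
  obtain d v where y: "y = (d, v)" by fastforce
  have "lin [(c, u)] \<odot> lin ((d, v) # ys)
      = lin [(c * d, u @ v)] \<oplus> lin (map (\<lambda>(d, v). (c * d, u @ v)) ys)"
    unfolding lin_Cons[of "(d, v)" ys] amul_add_right Cons.IH lin_single_mul ..
  then show ?case
    by (simp only: y list.map prod.case lin_Cons[symmetric])
qed

lemma lin_mul: "lin xs \<odot> lin ys = lin (lin_mult xs ys)"
proof (induction xs)
  case Nil
  then show ?case by (simp add: lin_Nil amul_zero_left lin_mult_def)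
next
  case (Cons x xs)
  obtain c u where x: "x = (c, u)" by fastforce
  show ?case
    unfolding lin_Cons[of x xs] amul_add_left Cons.IH
    by (simp add: x lin_single_mul_lin lin_mult_def lin_append)
qed

lemma range_lin_add: "a \<in> range lin \<Longrightarrow> b \<in> range lin \<Longrightarrow> a \<oplus> b \<in> range lin"
  by (auto simp: lin_append[symmetric])

lemma range_lin_mul: "a \<in> range lin \<Longrightarrow> b \<in> range lin \<Longrightarrow> a \<odot> b \<in> range lin"
  by (auto simp: lin_mul)

lemma range_lin_scal: "a \<in> range lin \<Longrightarrow> ascal c a \<in> range lin"
  by (auto simp: lin_scal)

lemma tsideal_lin_mul_left: "a \<in> tsideal R \<Longrightarrow> lin xs \<odot> a \<in> tsideal R"
proof (induction xs)
  case Nil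
  then show ?case by (simp add: lin_Nil amul_zero_left tsideal.zero)
next
  case (Cons x xs)
  obtain c u where "x = (c, u)" by fastforce
  then show ?case
    unfolding lin_Cons[of x xs] amul_add_left
    by (simp add: Cons lin_single amul_scal_left tsideal.add tsideal.scal tsideal.lmul)
qed

lemma tsideal_lin_mul_right: "a \<in> tsideal R \<Longrightarrow> a \<odot> lin xs \<in> tsideal R"
proof (induction xs)
  case Nil
  then show ?case by (simp add: lin_Nil amul_zero_right tsideal.zero)
next
  case (Cons x xs)
  obtain c u where "x = (c, u)" by fastforce
  then show ?case
    unfolding lin_Cons[of x xs] amul_add_right
    by (simp add: Cons lin_single amul_scal_right tsideal.add tsideal.scal tsideal.rmul)
qed

lemma cong_mod_trans [trans]:
  assumes "cong_mod R a b" and "cong_mod R b c"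
  shows "cong_mod R a c"
proof -
  have "asub a c = asub a b \<oplus> asub b c"
    unfolding asub_def aadd_def by simp
  then show ?thesis
    using assms unfolding cong_mod_def by (simp add: tsideal.add)
qed

lemma cong_mod_sym:
  assumes "cong_mod R a b"
  shows "cong_mod R b a"
proof -
  have "asub b a = ascal (-1) (asub a b)"
    unfolding asub_def ascal_def by simp
  then show ?thesis
    using assms unfolding cong_mod_def by (simp add: tsideal.scal)
qed

lemma eq_imp_cong_mod: "a = b \<Longrightarrow> cong_mod R a b"
  unfolding cong_mod_def asub_def by (simp add: tsideal.zero)

lemma cong_mod_mul_left: "c \<in> range lin \<Longrightarrow> cong_mod R a b \<Longrightarrow> cong_mod R (c \<odot> a) (c \<odot> b)"
  unfolding cong_mod_def by (auto simp: amul_sub_right[symmetric] tsideal_lin_mul_left)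

lemma cong_mod_mul_right: "c \<in> range lin \<Longrightarrow> cong_mod R a b \<Longrightarrow> cong_mod R (a \<odot> c) (b \<odot> c)"
  unfolding cong_mod_def by (auto simp: amul_sub_left[symmetric] tsideal_lin_mul_right)

lemma eA_x1A_lin: "eA k i = lin [(1, [Sg i]), (- qpar k, [])]" "x1A = lin [(1, [Xg])]"
  unfolding eA_def x1A_def monom_def by simp_all

lemma eA_x1A_range_lin: "eA k i \<in> range lin" "x1A \<in> range lin"
  unfolding eA_x1A_lin by simp_all

lemma e1_x1A_reassoc:
  "eA k 1 \<odot> (ascal (qpar k) (x1A \<odot> x1A \<odot> eA k 1) \<oplus> x1A \<odot> eA k 1 \<odot> x1A \<odot> eA k 1)
   = ascal (qpar k) (eA k 1 \<odot> x1A \<odot> x1A \<odot> eA k 1) \<oplus> eA k 1 \<odot> x1A \<odot> eA k 1 \<odot> x1A \<odot> eA k 1"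
  "(ascal (qpar k) (eA k 1 \<odot> x1A \<odot> x1A) \<oplus> eA k 1 \<odot> x1A \<odot> eA k 1 \<odot> x1A) \<odot> eA k 1
   = ascal (qpar k) (eA k 1 \<odot> x1A \<odot> x1A \<odot> eA k 1) \<oplus> eA k 1 \<odot> x1A \<odot> eA k 1 \<odot> x1A \<odot> eA k 1"
  "ascal c (ascal (qpar k) (eA k 1 \<odot> x1A \<odot> x1A) \<oplus> eA k 1 \<odot> x1A \<odot> eA k 1 \<odot> x1A)
   = ascal c (eA k 1) \<odot> (ascal (qpar k) (x1A \<odot> x1A) \<oplus> x1A \<odot> eA k 1 \<odot> x1A)"
  "ascal c (ascal (qpar k) (x1A \<odot> x1A \<odot> eA k 1) \<oplus> x1A \<odot> eA k 1 \<odot> x1A \<odot> eA k 1)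
   = (ascal (qpar k) (x1A \<odot> x1A) \<oplus> x1A \<odot> eA k 1 \<odot> x1A) \<odot> ascal c (eA k 1)"
  "eA k 1 \<odot> (ascal (qpar k) (eA k 1 \<odot> x1A \<odot> x1A) \<oplus> eA k 1 \<odot> x1A \<odot> eA k 1 \<odot> x1A)
   = (eA k 1 \<odot> eA k 1) \<odot> (ascal (qpar k) (x1A \<odot> x1A) \<oplus> x1A \<odot> eA k 1 \<odot> x1A)"
  "(ascal (qpar k) (x1A \<odot> x1A \<odot> eA k 1) \<oplus> x1A \<odot> eA k 1 \<odot> x1A \<odot> eA k 1) \<odot> eA k 1
   = (ascal (qpar k) (x1A \<odot> x1A) \<oplus> x1A \<odot> eA k 1 \<odot> x1A) \<odot> (eA k 1 \<odot> eA k 1)"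
  unfolding eA_x1A_lin
  by (simp_all only: lin_mul lin_scal lin_append[symmetric])
    (rule lin_eqI, simp add: lin_mult_def lin_eval algebra_simps)+

context
  fixes R :: "elt set" and k :: nat
  assumes hecke: "eA k 1 \<odot> lin [(1, [Sg 1]), (inverse (qpar k), [])] \<in> tsideal R"
    and braid: "asub (monom [Sg 1, Xg, Sg 1, Xg]) (monom [Xg, Sg 1, Xg, Sg 1]) \<in> tsideal R"
begin

lemma e1_square_cong:
  "cong_mod R (eA k 1 \<odot> eA k 1) (ascal (- (qpar k + inverse (qpar k))) (eA k 1))"
proof -
  have "asub (eA k 1 \<odot> eA k 1) (ascal (- (qpar k + inverse (qpar k))) (eA k 1))
      = eA k 1 \<odot> lin [(1, [Sg 1]), (inverse (qpar k), [])]"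
    unfolding eA_x1A_lin
    by (simp only: lin_mul lin_scal lin_sub, rule lin_eqI)
      (simp add: lin_mult_def lin_eval algebra_simps)
  then show ?thesis
    using hecke unfolding cong_mod_def by simp
qed

lemma e1_x1A_braid_cong:
  "cong_mod R (ascal (qpar k) (eA k 1 \<odot> x1A \<odot> x1A) \<oplus> eA k 1 \<odot> x1A \<odot> eA k 1 \<odot> x1A)
              (ascal (qpar k) (x1A \<odot> x1A \<odot> eA k 1) \<oplus> x1A \<odot> eA k 1 \<odot> x1A \<odot> eA k 1)"
proof -
  have "asub (ascal (qpar k) (eA k 1 \<odot> x1A \<odot> x1A) \<oplus> eA k 1 \<odot> x1A \<odot> eA k 1 \<odot> x1A)
             (ascal (qpar k) (x1A \<odot> x1A \<odot> eA k 1) \<oplus> x1A \<odot> eA k 1 \<odot> x1A \<odot> eA k 1)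
      = asub (monom [Sg 1, Xg, Sg 1, Xg]) (monom [Xg, Sg 1, Xg, Sg 1])"
    unfolding eA_x1A_lin monom_def
    by (simp only: lin_mul lin_scal lin_sub lin_append[symmetric], rule lin_eqI)
      (simp add: lin_mult_def lin_eval algebra_simps)
  then show ?thesis
    using braid unfolding cong_mod_def by simp
qed

lemma delta_Y_cong_middle:
  "cong_mod R
     (ascal (- (qpar k + inverse (qpar k)))
        (ascal (qpar k) (eA k 1 \<odot> x1A \<odot> x1A) \<oplus> eA k 1 \<odot> x1A \<odot> eA k 1 \<odot> x1A))
     (ascal (qpar k) (eA k 1 \<odot> x1A \<odot> x1A \<odot> eA k 1) \<oplus> eA k 1 \<odot> x1A \<odot> eA k 1 \<odot> x1A \<odot> eA k 1)"
  (is "cong_mod R (ascal ?\<delta> ?Y) ?M")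
proof -
  let ?e = "eA k 1"
  let ?Z = "ascal (qpar k) (x1A \<odot> x1A) \<oplus> x1A \<odot> ?e \<odot> x1A"
  let ?Y' = "ascal (qpar k) (x1A \<odot> x1A \<odot> ?e) \<oplus> x1A \<odot> ?e \<odot> x1A \<odot> ?e"
  have Z: "?Z \<in> range lin"
    by (intro range_lin_add range_lin_mul range_lin_scal eA_x1A_range_lin)
  have "cong_mod R (ascal ?\<delta> ?Y) (ascal ?\<delta> ?e \<odot> ?Z)"
    by (rule eq_imp_cong_mod, rule e1_x1A_reassoc(3))
  also have "cong_mod R \<dots> ((?e \<odot> ?e) \<odot> ?Z)"
    by (rule cong_mod_mul_right[OF Z cong_mod_sym[OF e1_square_cong]])
  also have "cong_mod R \<dots> (?e \<odot> ?Y)"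
    by (rule eq_imp_cong_mod, rule e1_x1A_reassoc(5)[symmetric])
  also have "cong_mod R \<dots> (?e \<odot> ?Y')"
    by (rule cong_mod_mul_left[OF eA_x1A_range_lin(1) e1_x1A_braid_cong])
  also have "cong_mod R \<dots> ?M"
    by (rule eq_imp_cong_mod, rule e1_x1A_reassoc(1))
  finally show ?thesis .
qed

lemma middle_cong_delta_Y:
  "cong_mod R
     (ascal (qpar k) (eA k 1 \<odot> x1A \<odot> x1A \<odot> eA k 1) \<oplus> eA k 1 \<odot> x1A \<odot> eA k 1 \<odot> x1A \<odot> eA k 1)
     (ascal (- (qpar k + inverse (qpar k)))
        (ascal (qpar k) (x1A \<odot> x1A \<odot> eA k 1) \<oplus> x1A \<odot> eA k 1 \<odot> x1A \<odot> eA k 1))"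
  (is "cong_mod R ?M (ascal ?\<delta> ?Y')")
proof -
  let ?e = "eA k 1"
  let ?Z = "ascal (qpar k) (x1A \<odot> x1A) \<oplus> x1A \<odot> ?e \<odot> x1A"
  let ?Y = "ascal (qpar k) (?e \<odot> x1A \<odot> x1A) \<oplus> ?e \<odot> x1A \<odot> ?e \<odot> x1A"
  have Z: "?Z \<in> range lin"
    by (intro range_lin_add range_lin_mul range_lin_scal eA_x1A_range_lin)
  have "cong_mod R ?M (?Y \<odot> ?e)"
    by (rule eq_imp_cong_mod, rule e1_x1A_reassoc(2)[symmetric])
  also have "cong_mod R \<dots> (?Y' \<odot> ?e)"
    by (rule cong_mod_mul_right[OF eA_x1A_range_lin(1) e1_x1A_braid_cong])
  also have "cong_mod R \<dots> (?Z \<odot> (?e \<odot> ?e))"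
    by (rule eq_imp_cong_mod, rule e1_x1A_reassoc(6))
  also have "cong_mod R \<dots> (?Z \<odot> ascal ?\<delta> ?e)"
    by (rule cong_mod_mul_left[OF Z e1_square_cong])
  also have "cong_mod R \<dots> (ascal ?\<delta> ?Y')"
    by (rule eq_imp_cong_mod, rule e1_x1A_reassoc(4)[symmetric])
  finally show ?thesis .
qed

end

theorem lemma2p3:
  fixes r k :: nat
  assumes "2 \<le> r" and "1 \<le> k"
  shows "affTL_eq r k
           (ascal (- (qpar k + inverse (qpar k)))
              (ascal (qpar k) (eA k 1 \<odot> x1A \<odot> x1A) \<oplus> eA k 1 \<odot> x1A \<odot> eA k 1 \<odot> x1A))
           (ascal (qpar k) (eA k 1 \<odot> x1A \<odot> x1A \<odot> eA k 1) \<oplus> eA k 1 \<odot> x1A \<odot> eA k 1 \<odot> x1A \<odot> eA k 1)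
       \<and> affTL_eq r k
           (ascal (qpar k) (eA k 1 \<odot> x1A \<odot> x1A \<odot> eA k 1) \<oplus> eA k 1 \<odot> x1A \<odot> eA k 1 \<odot> x1A \<odot> eA k 1)
           (ascal (- (qpar k + inverse (qpar k)))
              (ascal (qpar k) (x1A \<odot> x1A \<odot> eA k 1) \<oplus> x1A \<odot> eA k 1 \<odot> x1A \<odot> eA k 1))"
proof -
  have hecke: "eA k 1 \<odot> lin [(1, [Sg 1]), (inverse (qpar k), [])] \<in> tsideal (affTL_rels r k)"
  proof (rule tsideal.gen)
    have "eA k 1 \<odot> lin [(1, [Sg 1]), (inverse (qpar k), [])] \<in> hecke_rels r k"
      unfolding hecke_rels_def eA_def using assms(1) by force
    then show "eA k 1 \<odot> lin [(1, [Sg 1]), (inverse (qpar k), [])] \<in> affTL_rels r k"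
      unfolding affTL_rels_def by blast
  qed
  have braid: "asub (monom [Sg 1, Xg, Sg 1, Xg]) (monom [Xg, Sg 1, Xg, Sg 1]) \<in> tsideal (affTL_rels r k)"
    by (rule tsideal.gen) (use assms(1) in \<open>unfold affTL_rels_def braidB_rels_def, blast\<close>)
  show ?thesis
    unfolding affTL_eq_iff_cong_mod
    using delta_Y_cong_middle[OF hecke braid] middle_cong_delta_Y[OF hecke braid] ..
qed

end
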